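(* Every quantifier-free lifted Bayesian network $\mathfrak{G}$ over a relational signature $\sigma$ induces a projective family of distributions. In particular, $\mathfrak{G}$ has an asymptotic limit.
   Context: A relational signature $\sigma$ is a set of relation symbols (possibly multi-sorted, without equality). A functional lifted Bayesian network (FLBN) over $\sigma$ consists of a directed acyclic graph $G$ with node set $\sigma$, for each $R\in\sigma$ a finite tuple $(\chi_{R,i}(\vec{x},\vec{y}))_{i\le n_R}$ of first-order formulas over the signature of the $G$-parents of $R$ ($\vec{x}$ a sort-appropriate tuple of variables of length the arity of $R$), and a continuous $f_R:[0,1]^{n_R}\to[0,1]$. On a finite domain $D$ it induces the distribution on $\sigma$-structures with domain $D$ given by the Bayesian network with nodes the ground atoms $R(\vec{a})$, edges from $R_1(\vec{b})$ to $R_2(\vec{a})$ whenever $R_1\to R_2$ in $G$, and $R(\vec{a})$ true with probability $f_R\big((\|\chi_{R,i}(\vec{a},\vec{y})\|_{\vec{y}})_i\big)$, where $\|\chi(\vec{a},\vec{y})\|_{\vec{y}}$ is the fraction of sort-appropriate tuples $\vec{b}$ for $\vec{y}$ with $\chi(\vec{a},\vec{b})$ true in the structure given by the parent values. A quantifier-free lifted Bayesian network is an FLBN in which every $\chi_{R,i}$ is quantifier-free with all variables among $\vec{x}$. Domains are taken to be initial segments of $\mathbb{N}$ in each sort, with sort sizes $\vec{n}$; write $\mathbb{P}_{\vec{n}}$ for the induced distribution. Let $\Omega_\infty$ be the set of $\sigma$-structures with every sort equal to $\mathbb{N}$, with the $\sigma$-algebra generated by the generating sets $A$: for elements $a_1,\dots,a_m$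 and a $\sigma$-structure $\mathfrak{Y}$ on $\{a_1,\dots,a_m\}$, the set of structures whose induced substructure on $\{a_1,\dots,a_m\}$ is $\mathfrak{Y}$; $\mathbb{P}_{\vec{n}}(A)$ is defined (as the probability that the induced substructure on $\{a_1,\dots,a_m\}$ is $\mathfrak{Y}$) whenever each $a_i$ lies in the domain of its sort. A family $(\mathbb{P}_{\vec{n}})$ is projective if for every generating set $A$ the sequence $\mathbb{P}_{\vec{n}}(A)$ is constant wherever defined. A probability measure $\mathbb{P}_\infty$ on $\Omega_\infty$ is the asymptotic limit of $\mathfrak{G}$ if for every sequence of domains monotone and unbounded in the cardinality of every sort and every generating set $A$, the probabilities of $A$ converge to $\mathbb{P}_\infty(A)$. *)

theory Defs
  imports "HOL-Probability.Probability"
begin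

text \<open>A signature is given by a set Sig of relation symbols (type 'r) together with
  an arity function ar assigning to each relation symbol the list of sorts (type 's)
  of its argument places. Variables are pairs (sort, index); the sort of a variable
  is its first component. Domains are initial segments of the naturals in each sort,
  given by a size function n :: 's => nat; elements are natural numbers.\<close>

datatype ('s, 'r) fm =
    TT
  | Atom 'r "('s \<times> nat) list"
  | Neg "('s, 'r) fm"
  | Conj "('s, 'r) fm" "('s, 'r) fm"
  | Exists "'s \<times> nat" "('s, 'r) fm"

fun fv :: "('s, 'r) fm \<Rightarrow> ('s \<times> nat) set" where
  "fv TT = {}"
| "fv (Atom R vs) = set vs"
| "fv (Neg \<phi>) = fv \<phi>"
| "fv (Conj \<phi> \<psi>) = fv \<phi> \<union> fv \<psi>"
| "fv (Exists v \<phi>) = fv \<phi> - {v}"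

fun rels :: "('s, 'r) fm \<Rightarrow> 'r set" where
  "rels TT = {}"
| "rels (Atom R vs) = {R}"
| "rels (Neg \<phi>) = rels \<phi>"
| "rels (Conj \<phi> \<psi>) = rels \<phi> \<union> rels \<psi>"
| "rels (Exists v \<phi>) = rels \<phi>"

fun wf_fm :: "('r \<Rightarrow> 's list) \<Rightarrow> ('s, 'r) fm \<Rightarrow> bool" where
  "wf_fm ar TT = True"
| "wf_fm ar (Atom R vs) = (map fst vs = ar R)"
| "wf_fm ar (Neg \<phi>) = wf_fm ar \<phi>"
| "wf_fm ar (Conj \<phi> \<psi>) = (wf_fm ar \<phi> \<and> wf_fm ar \<psi>)"
| "wf_fm ar (Exists v \<phi>) = wf_fm ar \<phi>"

fun qfree :: "('s, 'r) fm \<Rightarrow> bool" where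
  "qfree TT = True"
| "qfree (Atom R vs) = True"
| "qfree (Neg \<phi>) = qfree \<phi>"
| "qfree (Conj \<phi> \<psi>) = (qfree \<phi> \<and> qfree \<psi>)"
| "qfree (Exists v \<phi>) = False"

fun sat :: "('s \<Rightarrow> nat) \<Rightarrow> ('r \<Rightarrow> nat list \<Rightarrow> bool) \<Rightarrow> ('s \<times> nat \<Rightarrow> nat)
            \<Rightarrow> ('s, 'r) fm \<Rightarrow> bool" where
  "sat n \<omega> \<rho> TT = True"
| "sat n \<omega> \<rho> (Atom R vs) = \<omega> R (map \<rho> vs)"
| "sat n \<omega> \<rho> (Neg \<phi>) = (\<not> sat n \<omega> \<rho> \<phi>)"
| "sat n \<omega> \<rho> (Conj \<phi> \<psi>) = (sat n \<omega> \<rho> \<phi> \<and> sat n \<omega> \<rho> \<psi>)"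
| "sat n \<omega> \<rho> (Exists v \<phi>) = (\<exists>a < n (fst v). sat n \<omega> (\<rho>(v := a)) \<phi>)"

definition xvars :: "('r \<Rightarrow> 's list) \<Rightarrow> 'r \<Rightarrow> ('s \<times> nat) list" where
  "xvars ar R = map (\<lambda>j. (ar R ! j, j)) [0..<length (ar R)]"

text \<open>An FLBN: a DAG on Sig (edges (P, R) meaning P is a parent of R), for each R a
  finite list of pairs (ys, chi) representing chi(x, y) with y the list ys of
  variables, and a combination function f R. A vector of n reals is encoded as a
  function nat => real vanishing from n on.\<close>
record ('s, 'r) flbn =
  edges :: "('r \<times> 'r) set"
  chis  :: "'r \<Rightarrow> (('s \<times> nat) list \<times> ('s, 'r) fm) list"
  comb  :: "'r \<Rightarrow> (nat \<Rightarrow> real) \<Rightarrow> real"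

definition cube :: "nat \<Rightarrow> (nat \<Rightarrow> real) set" where
  "cube k = {v. (\<forall>i<k. v i \<in> {0..1}) \<and> (\<forall>i\<ge>k. v i = 0)}"

definition parents :: "('s, 'r) flbn \<Rightarrow> 'r \<Rightarrow> 'r set" where
  "parents G R = {P. (P, R) \<in> edges G}"

definition is_flbn :: "'r set \<Rightarrow> ('r \<Rightarrow> 's list) \<Rightarrow> ('s, 'r) flbn \<Rightarrow> bool" where
  "is_flbn Sig ar G \<longleftrightarrow>
     finite Sig \<and> edges G \<subseteq> Sig \<times> Sig \<and> acyclic (edges G) \<and>
     (\<forall>R\<in>Sig.
        (\<forall>(ys, chi) \<in> set (chis G R).
            wf_fm ar chi \<and> rels chi \<subseteq> parents G R \<and> distinct ys \<and>
            set ys \<inter> set (xvars ar R) = {} \<and>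
            fv chi \<subseteq> set (xvars ar R) \<union> set ys) \<and>
        continuous_on (cube (length (chis G R))) (comb G R) \<and>
        comb G R ` cube (length (chis G R)) \<subseteq> {0..1})"

definition is_qf_lbn :: "'r set \<Rightarrow> ('r \<Rightarrow> 's list) \<Rightarrow> ('s, 'r) flbn \<Rightarrow> bool" where
  "is_qf_lbn Sig ar G \<longleftrightarrow> is_flbn Sig ar G \<and>
     (\<forall>R\<in>Sig. \<forall>(ys, chi) \<in> set (chis G R). ys = [] \<and> qfree chi \<and> fv chi \<subseteq> set (xvars ar R))"

definition sorted_tuples :: "('s \<Rightarrow> nat) \<Rightarrow> 's list \<Rightarrow> nat list set" where
  "sorted_tuples n ss = {t. length t = length ss \<and> (\<forall>j<length t. t ! j < n (ss ! j))}"

text \<open>Structures with domain given by n (canonically false outside Sig / the domain).\<close>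
definition fin_structs :: "'r set \<Rightarrow> ('r \<Rightarrow> 's list) \<Rightarrow> ('s \<Rightarrow> nat)
                           \<Rightarrow> ('r \<Rightarrow> nat list \<Rightarrow> bool) set" where
  "fin_structs Sig ar n =
     {\<omega>. \<forall>R t. \<omega> R t \<longrightarrow> R \<in> Sig \<and> t \<in> sorted_tuples n (ar R)}"

definition env_of :: "('s \<times> nat) list \<Rightarrow> nat list \<Rightarrow> ('s \<times> nat \<Rightarrow> nat)" where
  "env_of vs as = (\<lambda>v. case map_of (zip vs as) v of Some a \<Rightarrow> a | None \<Rightarrow> 0)"

definition frac :: "('r \<Rightarrow> 's list) \<Rightarrow> ('s \<Rightarrow> nat) \<Rightarrow> ('r \<Rightarrow> nat list \<Rightarrow> bool) \<Rightarrow> 'r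
                    \<Rightarrow> nat list \<Rightarrow> ('s \<times> nat) list \<times> ('s, 'r) fm \<Rightarrow> real" where
  "frac ar n \<omega> R a c =
     (let ys = fst c; chi = snd c; B = sorted_tuples n (map fst ys) in
      real (card {b \<in> B. sat n \<omega> (env_of (xvars ar R @ ys) (a @ b)) chi}) / real (card B))"

definition cond_prob :: "('r \<Rightarrow> 's list) \<Rightarrow> ('s, 'r) flbn \<Rightarrow> ('s \<Rightarrow> nat)
                         \<Rightarrow> ('r \<Rightarrow> nat list \<Rightarrow> bool) \<Rightarrow> 'r \<Rightarrow> nat list \<Rightarrow> real" where
  "cond_prob ar G n \<omega> R a =
     comb G R (\<lambda>i. if i < length (chis G R) then frac ar n \<omega> R a (chis G R ! i) else 0)"

definition weight :: "'r set \<Rightarrow> ('r \<Rightarrow> 's list) \<Rightarrow> ('s, 'r) flbn \<Rightarrow> ('s \<Rightarrow> nat)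
                      \<Rightarrow> ('r \<Rightarrow> nat list \<Rightarrow> bool) \<Rightarrow> real" where
  "weight Sig ar G n \<omega> =
     (\<Prod>R\<in>Sig. \<Prod>a\<in>sorted_tuples n (ar R).
        if \<omega> R a then cond_prob ar G n \<omega> R a else 1 - cond_prob ar G n \<omega> R a)"

definition tuple_in :: "('r \<Rightarrow> 's list) \<Rightarrow> ('s \<times> nat) set \<Rightarrow> 'r \<Rightarrow> nat list \<Rightarrow> bool" where
  "tuple_in ar A R t \<longleftrightarrow> length t = length (ar R) \<and> (\<forall>j<length t. (ar R ! j, t ! j) \<in> A)"

text \<open>Omega-infinity: sigma-structures with every sort equal to the naturals.\<close>
definition Omega_inf :: "'r set \<Rightarrow> ('r \<Rightarrow> 's list) \<Rightarrow> ('r \<Rightarrow> nat list \<Rightarrow> bool) set" where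
  "Omega_inf Sig ar = {\<omega>. \<forall>R t. \<omega> R t \<longrightarrow> R \<in> Sig \<and> length t = length (ar R)}"

text \<open>The generating set for elements A and structure Y on A: the induced substructure
  on A is Y (only the values of Y on tuples from A matter).\<close>
definition agrees_on :: "'r set \<Rightarrow> ('r \<Rightarrow> 's list) \<Rightarrow> ('s \<times> nat) set
                         \<Rightarrow> ('r \<Rightarrow> nat list \<Rightarrow> bool) \<Rightarrow> ('r \<Rightarrow> nat list \<Rightarrow> bool) \<Rightarrow> bool" where
  "agrees_on Sig ar A Y \<omega> \<longleftrightarrow> (\<forall>R\<in>Sig. \<forall>t. tuple_in ar A R t \<longrightarrow> \<omega> R t = Y R t)"

definition gen_set :: "'r set \<Rightarrow> ('r \<Rightarrow> 's list) \<Rightarrow> ('s \<times> nat) set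
                       \<Rightarrow> ('r \<Rightarrow> nat list \<Rightarrow> bool) \<Rightarrow> ('r \<Rightarrow> nat list \<Rightarrow> bool) set" where
  "gen_set Sig ar A Y = {\<omega> \<in> Omega_inf Sig ar. agrees_on Sig ar A Y \<omega>}"

definition gen_sets :: "'r set \<Rightarrow> ('r \<Rightarrow> 's list) \<Rightarrow> ('r \<Rightarrow> nat list \<Rightarrow> bool) set set" where
  "gen_sets Sig ar = {gen_set Sig ar A Y | A Y. finite A}"

definition prob_n :: "'r set \<Rightarrow> ('r \<Rightarrow> 's list) \<Rightarrow> ('s, 'r) flbn \<Rightarrow> ('s \<Rightarrow> nat)
                      \<Rightarrow> ('s \<times> nat) set \<Rightarrow> ('r \<Rightarrow> nat list \<Rightarrow> bool) \<Rightarrow> real" where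
  "prob_n Sig ar G n A Y =
     (\<Sum>\<omega> \<in> {\<omega> \<in> fin_structs Sig ar n. agrees_on Sig ar A Y \<omega>}. weight Sig ar G n \<omega>)"

definition in_domain :: "('s \<Rightarrow> nat) \<Rightarrow> ('s \<times> nat) set \<Rightarrow> bool" where
  "in_domain n A \<longleftrightarrow> (\<forall>(s, a) \<in> A. a < n s)"

definition projective :: "'r set \<Rightarrow> ('r \<Rightarrow> 's list) \<Rightarrow> ('s, 'r) flbn \<Rightarrow> bool" where
  "projective Sig ar G \<longleftrightarrow>
     (\<forall>A Y n n'. finite A \<longrightarrow> in_domain n A \<longrightarrow> in_domain n' A \<longrightarrow>
        prob_n Sig ar G n A Y = prob_n Sig ar G n' A Y)"

definition is_asymptotic_limit ::
  "'r set \<Rightarrow> ('r \<Rightarrow> 's list) \<Rightarrow> ('s, 'r) flbn \<Rightarrow> ('r \<Rightarrow> nat list \<Rightarrow> bool) measure \<Rightarrow> bool" where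
  "is_asymptotic_limit Sig ar G M \<longleftrightarrow>
     prob_space M \<and> space M = Omega_inf Sig ar \<and>
     sets M = sigma_sets (Omega_inf Sig ar) (gen_sets Sig ar) \<and>
     (\<forall>seq :: nat \<Rightarrow> 's \<Rightarrow> nat.
        (\<forall>s. incseq (\<lambda>k. seq k s)) \<longrightarrow> (\<forall>s. \<forall>B. \<exists>k. B \<le> seq k s) \<longrightarrow>
        (\<forall>A Y. finite A \<longrightarrow>
           (\<lambda>k. prob_n Sig ar G (seq k) A Y) \<longlonglongrightarrow> measure M (gen_set Sig ar A Y)))"

end

theory Submission
  imports Defs
begin

text \<open>All finite-domain distributions live on one probability space. Flip an independent coin
  with bias f_R(v) for every ground atom R(t) and every truth-value vector v of the formulas
  chi_{R,i}(t), and let R(t) hold iff the coin indexed by R(t) and the actual values of its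
  formulas shows heads, a recursion along the DAG. As the chi's are quantifier-free, the formulas
  of R(t) only look at atoms over the elements of t, so the structure induced on a set A of
  elements is determined by the coins of the atoms over A. By the chain rule the structure on a
  domain of sizes n has distribution P_n; hence P_n(A) is the probability of an event that does
  not depend on n, and the push-forward of the coin measure is the asymptotic limit.\<close>

section \<open>Independent coins\<close>

definition determined_by :: "('i \<Rightarrow> bool) set \<Rightarrow> 'i set \<Rightarrow> bool" where
  "determined_by E J \<longleftrightarrow> (\<forall>x z. (\<forall>i\<in>J. x i = z i) \<longrightarrow> (x \<in> E \<longleftrightarrow> z \<in> E))"

definition cylinder :: "'i set \<Rightarrow> 'i set \<Rightarrow> ('i \<Rightarrow> bool) set" where
  "cylinder J S = {x. \<forall>i\<in>J. x i = (i \<in> S)}"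

abbreviation coins :: "('i \<Rightarrow> bool pmf) \<Rightarrow> ('i \<Rightarrow> bool) measure" where
  "coins p \<equiv> PiM UNIV (\<lambda>i. measure_pmf (p i))"

lemma space_coins [simp]: "space (coins p) = UNIV"
  by (auto simp: space_PiM PiE_def extensional_def)

lemma prob_space_coins: "prob_space (coins p)"
  by (rule prob_space_PiM) (simp add: prob_space_measure_pmf)

lemma measure_coins_fixed:
  assumes "finite J"
  shows "measure (coins p) {x. \<forall>i\<in>J. x i = y i} = (\<Prod>i\<in>J. pmf (p i) (y i))"
proof -
  interpret product_prob_space "\<lambda>i. measure_pmf (p i)" UNIV
    by unfold_locales
  have "emeasure (coins p) {x \<in> space (coins p). \<forall>i\<in>J. x i \<in> {y i}} =
      (\<Prod>i\<in>J. emeasure (measure_pmf (p i)) {y i})"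
    using assms by (intro emeasure_PiM_Collect) auto
  then have "emeasure (coins p) {x. \<forall>i\<in>J. x i = y i} = ennreal (\<Prod>i\<in>J. pmf (p i) (y i))"
    by (simp add: emeasure_pmf_single prod_ennreal)
  then show ?thesis
    by (simp add: measure_def prod_nonneg)
qed

lemma coordinate_in_sets_coins: "{x. x i = b} \<in> sets (coins p)"
proof -
  have "{x \<in> space (coins p). x i = b} \<in> sets (coins p)"
    by measurable
  then show ?thesis by simp
qed

lemma cylinder_in_sets_coins:
  assumes "finite J"
  shows "cylinder J S \<in> sets (coins p)"
proof -
  have "{x \<in> space (coins p). \<forall>i\<in>J. x i = (i \<in> S)} \<in> sets (coins p)"
    using assms by (intro sets.sets_Collect_finite_All) (simp_all add: coordinate_in_sets_coins)
  then show ?thesis by (simp add: cylinder_def)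
qed

lemma determined_byD:
  "determined_by E J \<Longrightarrow> \<forall>i\<in>J. x i = z i \<Longrightarrow> x \<in> E \<longleftrightarrow> z \<in> E"
  unfolding determined_by_def by blast

lemma determined_by_eq_UN_cylinder:
  assumes "determined_by E J"
  shows "E = (\<Union>S\<in>{S. S \<subseteq> J \<and> (\<lambda>i. i \<in> S) \<in> E}. cylinder J S)"
proof (intro equalityI subsetI)
  fix x assume "x \<in> E"
  moreover have "(\<lambda>i. i \<in> {j\<in>J. x j}) \<in> E \<longleftrightarrow> x \<in> E"
    by (rule determined_byD[OF assms]) simp
  ultimately show "x \<in> (\<Union>S\<in>{S. S \<subseteq> J \<and> (\<lambda>i. i \<in> S) \<in> E}. cylinder J S)"
    by (intro UN_I[of "{j\<in>J. x j}"]) (auto simp: cylinder_def)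
next
  fix x assume "x \<in> (\<Union>S\<in>{S. S \<subseteq> J \<and> (\<lambda>i. i \<in> S) \<in> E}. cylinder J S)"
  then obtain S where "(\<lambda>i. i \<in> S) \<in> E" "\<forall>i\<in>J. x i = (i \<in> S)"
    by (auto simp: cylinder_def)
  then show "x \<in> E"
    using determined_byD[OF assms, of x "\<lambda>i. i \<in> S"] by blast
qed

lemma determined_by_in_sets_coins:
  assumes "finite J" "determined_by E J"
  shows "E \<in> sets (coins p)"
proof -
  have "finite {S. S \<subseteq> J \<and> (\<lambda>i. i \<in> S) \<in> E}"
    using finite_Pow_iff[THEN iffD2, OF assms(1)] by (rule rev_finite_subset) blast
  then have "(\<Union>S\<in>{S. S \<subseteq> J \<and> (\<lambda>i. i \<in> S) \<in> E}. cylinder J S) \<in> sets (coins p)"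
    using assms(1) by (intro sets.finite_UN cylinder_in_sets_coins) auto
  then show ?thesis
    using determined_by_eq_UN_cylinder[OF assms(2)] by simp
qed

lemma measure_cylinder_Int_coordinate:
  assumes "finite J" "i0 \<notin> J"
  shows "measure (coins p) (cylinder J S \<inter> {x. x i0 = b}) =
    measure (coins p) (cylinder J S) * pmf (p i0) b"
proof -
  have "cylinder J S \<inter> {x. x i0 = b} =
      {x. \<forall>i\<in>insert i0 J. x i = (if i = i0 then b else i \<in> S)}"
    using assms(2) by (auto simp: cylinder_def)
  then have "measure (coins p) (cylinder J S \<inter> {x. x i0 = b}) =
      (\<Prod>i\<in>insert i0 J. pmf (p i) (if i = i0 then b else i \<in> S))"
    using assms(1) by (simp only: measure_coins_fixed finite_insert)
  also have "\<dots> = pmf (p i0) b * (\<Prod>i\<in>J. pmf (p i) (i \<in> S))"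
    using assms by (auto intro!: prod.cong)
  also have "(\<Prod>i\<in>J. pmf (p i) (i \<in> S)) = measure (coins p) (cylinder J S)"
    using assms(1) by (simp add: cylinder_def measure_coins_fixed)
  finally show ?thesis by simp
qed

lemma measure_determined_Int_coordinate:
  assumes "finite J" "determined_by E J" "i0 \<notin> J"
  shows "measure (coins p) (E \<inter> {x. x i0 = b}) = measure (coins p) E * pmf (p i0) b"
proof -
  interpret prob_space "coins p" by (rule prob_space_coins)
  define F where "F = {S. S \<subseteq> J \<and> (\<lambda>i. i \<in> S) \<in> E}"
  have E: "E = (\<Union>S\<in>F. cylinder J S)"
    unfolding F_def by (rule determined_by_eq_UN_cylinder[OF assms(2)])
  have "finite F"
    using assms(1) unfolding F_def by (auto intro: rev_finite_subset[of "Pow J"])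
  have disjoint: "disjoint_family_on (cylinder J) F"
    unfolding disjoint_family_on_def cylinder_def F_def by auto
  have "measure (coins p) (E \<inter> {x. x i0 = b}) =
      measure (coins p) (\<Union>S\<in>F. cylinder J S \<inter> {x. x i0 = b})"
    by (subst E) auto
  also have "\<dots> = (\<Sum>S\<in>F. measure (coins p) (cylinder J S \<inter> {x. x i0 = b}))"
  proof (rule finite_measure_finite_Union)
    show "(\<lambda>S. cylinder J S \<inter> {x. x i0 = b}) ` F \<subseteq> events"
      using assms(1) by (auto intro: cylinder_in_sets_coins coordinate_in_sets_coins)
    show "disjoint_family_on (\<lambda>S. cylinder J S \<inter> {x. x i0 = b}) F"
      using disjoint unfolding disjoint_family_on_def by blast
  qed fact
  also have "\<dots> = (\<Sum>S\<in>F. measure (coins p) (cylinder J S)) * pmf (p i0) b"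
    using assms by (simp add: measure_cylinder_Int_coordinate sum_distrib_right)
  also have "(\<Sum>S\<in>F. measure (coins p) (cylinder J S)) = measure (coins p) E"
    unfolding E using \<open>finite F\<close> assms(1) disjoint
    by (intro finite_measure_finite_Union[symmetric]) (auto intro: cylinder_in_sets_coins)
  finally show ?thesis .
qed

section \<open>Quantifier-free formulas\<close>

fun atoms :: "('s, 'r) fm \<Rightarrow> ('r \<times> ('s \<times> nat) list) set" where
  "atoms TT = {}"
| "atoms (Atom R vs) = {(R, vs)}"
| "atoms (Neg \<phi>) = atoms \<phi>"
| "atoms (Conj \<phi> \<psi>) = atoms \<phi> \<union> atoms \<psi>"
| "atoms (Exists v \<phi>) = atoms \<phi>"

lemma sat_qfree_cong:
  "qfree \<phi> \<Longrightarrow> (\<forall>(P, vs)\<in>atoms \<phi>. \<omega> P (map \<rho> vs) = \<omega>' P (map \<rho> vs)) \<Longrightarrow>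
    sat n \<omega> \<rho> \<phi> = sat n' \<omega>' \<rho> \<phi>"
  by (induction \<phi>) auto

lemma atoms_rels: "(P, vs) \<in> atoms \<phi> \<Longrightarrow> P \<in> rels \<phi>"
  by (induction \<phi>) auto

lemma atoms_wf_fm: "wf_fm ar \<phi> \<Longrightarrow> (P, vs) \<in> atoms \<phi> \<Longrightarrow> map fst vs = ar P"
  by (induction \<phi>) auto

lemma atoms_fv_qfree: "qfree \<phi> \<Longrightarrow> (P, vs) \<in> atoms \<phi> \<Longrightarrow> set vs \<subseteq> fv \<phi>"
  by (induction \<phi>) auto

lemma set_xvars: "set (xvars ar R) = {(ar R ! k, k) | k. k < length (ar R)}"
  by (auto simp: xvars_def)

lemma env_of_xvars:
  assumes "length t = length (ar R)" "k < length (ar R)"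
  shows "env_of (xvars ar R) t (ar R ! k, k) = t ! k"
proof -
  have "distinct (xvars ar R)"
    by (auto simp: xvars_def distinct_map inj_on_def)
  then have "map_of (zip (xvars ar R) t) (xvars ar R ! k) = Some (t ! k)"
    using assms by (intro map_of_zip_nth) (auto simp: xvars_def)
  then show ?thesis
    using assms(2) by (simp add: env_of_def xvars_def)
qed

section \<open>Structures, tuples and domains\<close>

definition structs_on :: "('r \<times> nat list) set \<Rightarrow> ('r \<Rightarrow> nat list \<Rightarrow> bool) set" where
  "structs_on T = {\<omega>. \<forall>R t. \<omega> R t \<longrightarrow> (R, t) \<in> T}"

lemma finite_structs_on:
  assumes "finite T"
  shows "finite (structs_on T)"
proof -
  have "structs_on T \<subseteq> (\<lambda>X R t. (R, t) \<in> X) ` Pow T"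
  proof
    fix \<omega> assume "\<omega> \<in> structs_on T"
    then show "\<omega> \<in> (\<lambda>X R t. (R, t) \<in> X) ` Pow T"
      by (intro image_eqI[of _ _ "{(R, t). \<omega> R t}"]) (auto simp: structs_on_def)
  qed
  then show ?thesis
    using assms by (blast intro: finite_subset)
qed

lemma tuple_in_iff_set_zip:
  "tuple_in ar A R t \<longleftrightarrow> length t = length (ar R) \<and> set (zip (ar R) t) \<subseteq> A"
  by (auto simp: tuple_in_def set_zip; blast)

definition domain_elems :: "('s \<Rightarrow> nat) \<Rightarrow> ('s \<times> nat) set" where
  "domain_elems n = {(s, a). a < n s}"

lemma in_domain_iff_subset: "in_domain n A \<longleftrightarrow> A \<subseteq> domain_elems n"
  by (auto simp: in_domain_def domain_elems_def)

lemma finite_sort_domain_elems [simp]: "finite {a. (s, a) \<in> domain_elems n}"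
  by (simp add: domain_elems_def)

lemma tuple_in_domain_elems: "tuple_in ar (domain_elems n) R t \<longleftrightarrow> t \<in> sorted_tuples n (ar R)"
  by (auto simp: tuple_in_def sorted_tuples_def domain_elems_def)

lemma eventually_in_domain:
  fixes seq :: "nat \<Rightarrow> 's \<Rightarrow> nat"
  assumes "\<forall>s. incseq (\<lambda>k. seq k s)" "\<forall>s. \<forall>B. \<exists>k. B \<le> seq k s" "finite A"
  shows "eventually (\<lambda>k. in_domain (seq k) A) sequentially"
proof -
  have "eventually (\<lambda>k. a < seq k s) sequentially" for s a
  proof -
    obtain k0 where "Suc a \<le> seq k0 s"
      using assms(2) by blast
    then show ?thesis
      using assms(1) unfolding eventually_sequentially incseq_def
      by (meson Suc_le_lessD order.strict_trans2)
  qed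
  then show ?thesis
    unfolding in_domain_def using assms(3) by (auto intro: eventually_ball_finite)
qed

lemma finite_tuple_in:
  assumes "\<And>s. finite {a. (s, a) \<in> A}"
  shows "finite {t. tuple_in ar A R t}"
proof -
  let ?L = "{t. set t \<subseteq> (\<Union>s\<in>set (ar R). {a. (s, a) \<in> A}) \<and> length t = length (ar R)}"
  have "{t. tuple_in ar A R t} \<subseteq> ?L"
    by (force simp: tuple_in_def in_set_conv_nth)
  moreover have "finite ?L"
    using assms by (intro finite_lists_length_eq) auto
  ultimately show ?thesis
    by (rule finite_subset)
qed

definition vec_of_bools :: "bool list \<Rightarrow> nat \<Rightarrow> real" where
  "vec_of_bools v i = (if i < length v \<and> v ! i then 1 else 0)"

lemma vec_of_bools_in_cube: "vec_of_bools v \<in> cube (length v)"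
  by (auto simp: vec_of_bools_def cube_def)

section \<open>The coupling\<close>

locale qf_lbn =
  fixes Sig :: "'r set" and ar :: "'r \<Rightarrow> 's list" and G :: "('s, 'r) flbn"
  assumes qf_lbn: "is_qf_lbn Sig ar G"
begin

lemma is_flbn: "is_flbn Sig ar G"
  using qf_lbn by (simp add: is_qf_lbn_def)

lemma finite_Sig: "finite Sig"
  using is_flbn by (simp add: is_flbn_def)

lemma edges_subset: "edges G \<subseteq> Sig \<times> Sig"
  using is_flbn by (simp add: is_flbn_def)

lemma acyclic_edges: "acyclic (edges G)"
  using is_flbn by (simp add: is_flbn_def)

lemma finite_edges: "finite (edges G)"
  using finite_subset[OF edges_subset] finite_Sig by blast

lemma wf_edges: "wf (edges G)"
  by (rule finite_acyclic_wf[OF finite_edges acyclic_edges])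

lemma wf_converse_edges: "wf ((edges G)\<inverse>)"
  by (rule finite_acyclic_wf_converse[OF finite_edges acyclic_edges])

lemma chis_wellformed:
  assumes "R \<in> Sig" "(ys, \<phi>) \<in> set (chis G R)"
  shows "qfree \<phi> \<and> fv \<phi> \<subseteq> set (xvars ar R) \<and> wf_fm ar \<phi> \<and> rels \<phi> \<subseteq> parents G R \<and> ys = []"
proof -
  have "\<forall>(ys, \<phi>)\<in>set (chis G R). ys = [] \<and> qfree \<phi> \<and> fv \<phi> \<subseteq> set (xvars ar R)"
    using qf_lbn assms(1) unfolding is_qf_lbn_def by blast
  moreover have "\<forall>(ys, \<phi>)\<in>set (chis G R). wf_fm ar \<phi> \<and> rels \<phi> \<subseteq> parents G R \<and> distinct ys \<and>
      set ys \<inter> set (xvars ar R) = {} \<and> fv \<phi> \<subseteq> set (xvars ar R) \<union> set ys"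
    using is_flbn assms(1) unfolding is_flbn_def by blast
  ultimately show ?thesis
    using assms(2) by fastforce
qed

lemma comb_in_unit_interval:
  assumes "R \<in> Sig" "length v = length (chis G R)"
  shows "0 \<le> comb G R (vec_of_bools v) \<and> comb G R (vec_of_bools v) \<le> 1"
proof -
  have "comb G R ` cube (length (chis G R)) \<subseteq> {0..1}"
    using is_flbn assms(1) unfolding is_flbn_def by blast
  then show ?thesis
    using vec_of_bools_in_cube[of v] assms(2) by auto
qed

text \<open>The domain sizes passed to sat are irrelevant, the formulas being quantifier-free.\<close>

definition parent_config :: "('r \<Rightarrow> nat list \<Rightarrow> bool) \<Rightarrow> 'r \<Rightarrow> nat list \<Rightarrow> bool list" where
  "parent_config \<omega> R t = map (\<lambda>c. sat (\<lambda>_. 0) \<omega> (env_of (xvars ar R) t) (snd c)) (chis G R)"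

definition bias :: "('r \<Rightarrow> nat list \<Rightarrow> bool) \<Rightarrow> 'r \<Rightarrow> nat list \<Rightarrow> real" where
  "bias \<omega> R t = comb G R (vec_of_bools (parent_config \<omega> R t))"

definition coin :: "'r \<times> nat list \<times> bool list \<Rightarrow> bool pmf" where
  "coin = (\<lambda>(R, t, v). bernoulli_pmf (comb G R (vec_of_bools v)))"

definition parent_atom :: "'r \<Rightarrow> nat list \<Rightarrow> 'r \<Rightarrow> nat list \<Rightarrow> bool" where
  "parent_atom R t P b \<longleftrightarrow> (P, R) \<in> edges G \<and> length b = length (ar P) \<and>
     set (zip (ar P) b) \<subseteq> set (zip (ar R) t)"

definition ancestral :: "('r \<times> nat list) set \<Rightarrow> bool" where
  "ancestral T \<longleftrightarrow> (\<forall>(R, t)\<in>T. R \<in> Sig \<and> length t = length (ar R) \<and>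
     (\<forall>P b. parent_atom R t P b \<longrightarrow> (P, b) \<in> T))"

definition chain_weight :: "('r \<times> nat list) set \<Rightarrow> ('r \<Rightarrow> nat list \<Rightarrow> bool) \<Rightarrow> real" where
  "chain_weight T \<omega> = (\<Prod>(R, t)\<in>T. if \<omega> R t then bias \<omega> R t else 1 - bias \<omega> R t)"

definition struct_of :: "('r \<times> nat list \<times> bool list \<Rightarrow> bool) \<Rightarrow> 'r \<Rightarrow> nat list \<Rightarrow> bool" where
  "struct_of x = wfrec (edges G)
     (\<lambda>g R t. R \<in> Sig \<and> length t = length (ar R) \<and> x (R, t, parent_config g R t))"

definition agree_event ::
  "('r \<times> nat list) set \<Rightarrow> ('r \<Rightarrow> nat list \<Rightarrow> bool) \<Rightarrow> ('r \<times> nat list \<times> bool list \<Rightarrow> bool) set"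
  where "agree_event T \<omega> = {x. \<forall>(R, t)\<in>T. struct_of x R t = \<omega> R t}"

definition coins_of :: "('r \<times> nat list) set \<Rightarrow> ('r \<times> nat list \<times> bool list) set" where
  "coins_of T = {(R, t, v). (R, t) \<in> T \<and> length v = length (chis G R)}"

lemma ancestralD:
  "ancestral T \<Longrightarrow> (R, t) \<in> T \<Longrightarrow> R \<in> Sig \<and> length t = length (ar R)"
  "ancestral T \<Longrightarrow> (R, t) \<in> T \<Longrightarrow> parent_atom R t P b \<Longrightarrow> (P, b) \<in> T"
  unfolding ancestral_def by blast+

lemma ancestralI:
  assumes "\<And>R t. (R, t) \<in> T \<Longrightarrow> R \<in> Sig \<and> length t = length (ar R)"
    and "\<And>R t P b. (R, t) \<in> T \<Longrightarrow> parent_atom R t P b \<Longrightarrow> (P, b) \<in> T"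
  shows "ancestral T"
  using assms unfolding ancestral_def by auto

lemma parent_atom_of_chi_atom:
  assumes R: "R \<in> Sig" and \<phi>: "(ys, \<phi>) \<in> set (chis G R)" and a: "(P, vs) \<in> atoms \<phi>"
    and len: "length t = length (ar R)"
  shows "parent_atom R t P (map (env_of (xvars ar R) t) vs)"
proof -
  let ?\<rho> = "env_of (xvars ar R) t"
  note props = chis_wellformed[OF R \<phi>]
  have P: "map fst vs = ar P"
    using atoms_wf_fm[OF _ a] props by simp
  have arg: "(fst v, ?\<rho> v) \<in> set (zip (ar R) t)" if "v \<in> set vs" for v
  proof -
    have "v \<in> set (xvars ar R)"
      using that atoms_fv_qfree[OF _ a] props by blast
    then obtain k where k: "k < length (ar R)" "v = (ar R ! k, k)"
      by (auto simp: set_xvars)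
    then have "?\<rho> v = t ! k"
      using env_of_xvars[of t ar R k] len by simp
    then show ?thesis
      using k len by (auto simp: set_zip)
  qed
  have "set (zip (ar P) (map ?\<rho> vs)) = (\<lambda>v. (fst v, ?\<rho> v)) ` set vs"
    unfolding P[symmetric] by (simp add: zip_map_map zip_same_conv_map image_image)
  then show ?thesis
    unfolding parent_atom_def
  proof (intro conjI)
    show "(P, R) \<in> edges G"
      using atoms_rels[OF a] props by (auto simp: parents_def)
    show "length (map ?\<rho> vs) = length (ar P)"
      using arg_cong[OF P, of length] by simp
  qed (use arg in auto)
qed

lemma length_parent_config [simp]: "length (parent_config \<omega> R t) = length (chis G R)"
  by (simp add: parent_config_def)

lemma parent_config_cong:
  assumes "R \<in> Sig" "length t = length (ar R)"
    and "\<And>P b. parent_atom R t P b \<Longrightarrow> \<omega> P b = \<omega>' P b"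
  shows "parent_config \<omega> R t = parent_config \<omega>' R t"
  unfolding parent_config_def
proof (intro map_cong refl)
  fix c assume "c \<in> set (chis G R)"
  moreover obtain ys \<phi> where c: "c = (ys, \<phi>)"
    by fastforce
  ultimately have \<phi>: "(ys, \<phi>) \<in> set (chis G R)"
    by simp
  have "sat (\<lambda>_. 0) \<omega> (env_of (xvars ar R) t) \<phi> = sat (\<lambda>_. 0) \<omega>' (env_of (xvars ar R) t) \<phi>"
  proof (rule sat_qfree_cong)
    show "qfree \<phi>"
      using chis_wellformed[OF assms(1) \<phi>] by simp
    show "\<forall>(P, vs)\<in>atoms \<phi>. \<omega> P (map (env_of (xvars ar R) t) vs) = \<omega>' P (map (env_of (xvars ar R) t) vs)"
      using assms(3) parent_atom_of_chi_atom[OF assms(1) \<phi> _ assms(2)] by blast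
  qed
  then show "sat (\<lambda>_. 0) \<omega> (env_of (xvars ar R) t) (snd c) =
      sat (\<lambda>_. 0) \<omega>' (env_of (xvars ar R) t) (snd c)"
    by (simp add: c)
qed

lemma struct_of_unfold:
  "struct_of x R t \<longleftrightarrow>
    R \<in> Sig \<and> length t = length (ar R) \<and> x (R, t, parent_config (struct_of x) R t)"
proof -
  have "struct_of x R t \<longleftrightarrow> R \<in> Sig \<and> length t = length (ar R) \<and>
      x (R, t, parent_config (cut (struct_of x) (edges G) R) R t)"
    unfolding struct_of_def by (subst wfrec[OF wf_edges]) simp
  moreover have "parent_config (cut (struct_of x) (edges G) R) R t = parent_config (struct_of x) R t"
    if "R \<in> Sig" "length t = length (ar R)"
    using that by (intro parent_config_cong) (auto simp: parent_atom_def cut_apply)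
  ultimately show ?thesis
    by (cases "R \<in> Sig \<and> length t = length (ar R)") auto
qed

lemma struct_of_cong:
  assumes "ancestral T" "\<forall>i\<in>coins_of T. x i = z i" "(R, t) \<in> T"
  shows "struct_of x R t = struct_of z R t"
  using assms(3)
proof (induction R arbitrary: t rule: wf_induct_rule[OF wf_edges])
  case (1 R)
  have "parent_config (struct_of x) R t = parent_config (struct_of z) R t"
  proof (rule parent_config_cong)
    show "R \<in> Sig" "length t = length (ar R)"
      using ancestralD(1)[OF assms(1) "1.prems"] by auto
    fix P b assume Pb: "parent_atom R t P b"
    then have "(P, R) \<in> edges G"
      by (simp add: parent_atom_def)
    then show "struct_of x P b = struct_of z P b"
      using "1.IH" ancestralD(2)[OF assms(1) "1.prems" Pb] by blast
  qed
  moreover have "x (R, t, parent_config (struct_of z) R t) = z (R, t, parent_config (struct_of z) R t)"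
    using assms(2) "1.prems" by (auto simp: coins_of_def)
  ultimately show ?case
    by (subst (1 2) struct_of_unfold) simp
qed

lemma finite_coins_of:
  assumes "finite T"
  shows "finite (coins_of T)"
proof -
  have "finite {v :: bool list. length v = k}" for k
    using finite_lists_length_eq[of "UNIV :: bool set" k] by simp
  moreover have "coins_of T = (\<Union>(R, t)\<in>T. {R} \<times> {t} \<times> {v. length v = length (chis G R)})"
    by (auto simp: coins_of_def)
  ultimately show ?thesis
    using assms by (auto intro!: finite_UN_I finite_cartesian_product)
qed

lemma agree_eventI: "(\<And>R t. (R, t) \<in> T \<Longrightarrow> struct_of x R t = \<omega> R t) \<Longrightarrow> x \<in> agree_event T \<omega>"
  by (auto simp: agree_event_def)

lemma agree_eventD: "x \<in> agree_event T \<omega> \<Longrightarrow> (R, t) \<in> T \<Longrightarrow> struct_of x R t = \<omega> R t"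
  by (auto simp: agree_event_def)

lemma agree_event_determined_by:
  assumes "ancestral T"
  shows "determined_by (agree_event T \<omega>) (coins_of T)"
proof -
  have "x \<in> agree_event T \<omega> \<longleftrightarrow> z \<in> agree_event T \<omega>" if "\<forall>i\<in>coins_of T. x i = z i" for x z
    using struct_of_cong[OF assms that] by (auto simp: agree_event_def)
  then show ?thesis
    unfolding determined_by_def by blast
qed

lemma agree_event_in_sets:
  "finite T \<Longrightarrow> ancestral T \<Longrightarrow> agree_event T \<omega> \<in> sets (coins coin)"
  by (rule determined_by_in_sets_coins[OF finite_coins_of agree_event_determined_by])

lemma pmf_coin:
  assumes "R \<in> Sig"
  shows "pmf (coin (R, t, parent_config \<omega> R t)) b = (if b then bias \<omega> R t else 1 - bias \<omega> R t)"
  using comb_in_unit_interval[OF assms, of "parent_config \<omega> R t"]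
  by (simp add: coin_def bias_def)

lemma ancestral_remove_maximal:
  assumes "ancestral T" "T \<noteq> {}"
  obtains R t where "(R, t) \<in> T" "ancestral (T - {(R, t)})"
    "\<And>P b. parent_atom R t P b \<Longrightarrow> (P, b) \<in> T - {(R, t)}"
proof -
  obtain R0 t0 where "(R0, t0) \<in> T"
    using assms(2) by auto
  then have "R0 \<in> fst ` T"
    by force
  then obtain R where "R \<in> fst ` T" and maximal: "\<And>Q. (Q, R) \<in> (edges G)\<inverse> \<Longrightarrow> Q \<notin> fst ` T"
    by (rule wfE_min[OF wf_converse_edges]) blast
  then obtain t where Rt: "(R, t) \<in> T"
    by auto
  have no_child: "\<not> parent_atom Q c R t" if "(Q, c) \<in> T" for Q c
  proof -
    have "Q \<in> fst ` T"
      using that by force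
    then show ?thesis
      using maximal[of Q] by (auto simp: parent_atom_def)
  qed
  have "parent_atom R t P b \<Longrightarrow> (P, b) \<in> T - {(R, t)}" for P b
    using ancestralD(2)[OF assms(1) Rt] no_child[OF Rt] by blast
  moreover have "ancestral (T - {(R, t)})"
  proof (rule ancestralI)
    fix Q c assume Qc: "(Q, c) \<in> T - {(R, t)}"
    then show "Q \<in> Sig \<and> length c = length (ar Q)"
      using ancestralD(1)[OF assms(1)] by blast
    fix P b assume "parent_atom Q c P b"
    then show "(P, b) \<in> T - {(R, t)}"
      using ancestralD(2)[OF assms(1)] no_child Qc by blast
  qed
  ultimately show ?thesis
    using that Rt by blast
qed

lemma agree_event_insert:
  assumes "R \<in> Sig" "length t = length (ar R)"
    and "\<And>P b. parent_atom R t P b \<Longrightarrow> (P, b) \<in> T"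
  shows "agree_event (insert (R, t) T) \<omega> =
    agree_event T \<omega> \<inter> {x. x (R, t, parent_config \<omega> R t) = \<omega> R t}"
proof -
  have "struct_of x R t = x (R, t, parent_config \<omega> R t)" if "x \<in> agree_event T \<omega>" for x
  proof -
    have "parent_config (struct_of x) R t = parent_config \<omega> R t"
      using assms agree_eventD[OF that] by (intro parent_config_cong) auto
    then show ?thesis
      using assms by (subst struct_of_unfold) simp
  qed
  then show ?thesis
    by (auto simp: agree_event_def)
qed

text \<open>Chain rule: the coin deciding an atom without children in T is none of the coins that
  decide the remaining atoms, hence independent of them.\<close>

lemma measure_agree_event:
  assumes "finite T" "ancestral T"
  shows "measure (coins coin) (agree_event T \<omega>) = chain_weight T \<omega>"
  using assms
proof (induction T rule: finite_remove_induct)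
  case empty
  then show ?case
    using prob_space.prob_space[OF prob_space_coins] by (simp add: agree_event_def chain_weight_def)
next
  case (remove U)
  obtain R t where Rt: "(R, t) \<in> U" and anc: "ancestral (U - {(R, t)})"
    and parents: "\<And>P b. parent_atom R t P b \<Longrightarrow> (P, b) \<in> U - {(R, t)}"
    using ancestral_remove_maximal[OF remove.prems remove.hyps(2)] by blast
  note R = ancestralD(1)[OF remove.prems Rt]
  let ?v = "parent_config \<omega> R t"
  have "agree_event U \<omega> = agree_event (insert (R, t) (U - {(R, t)})) \<omega>"
    using Rt by (simp add: insert_absorb)
  also have "\<dots> = agree_event (U - {(R, t)}) \<omega> \<inter> {x. x (R, t, ?v) = \<omega> R t}"
    by (rule agree_event_insert[OF _ _ parents]) (use R in auto)
  finally have "measure (coins coin) (agree_event U \<omega>) =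
      measure (coins coin) (agree_event (U - {(R, t)}) \<omega>) * pmf (coin (R, t, ?v)) (\<omega> R t)"
    using remove.hyps(1)
    by (simp add: measure_determined_Int_coordinate[OF finite_coins_of agree_event_determined_by[OF anc]]
      coins_of_def)
  also have "\<dots> = chain_weight (U - {(R, t)}) \<omega> * (if \<omega> R t then bias \<omega> R t else 1 - bias \<omega> R t)"
    using remove.IH[OF Rt anc] pmf_coin R by simp
  also have "\<dots> = chain_weight U \<omega>"
    using remove.hyps(1) Rt by (simp add: chain_weight_def prod.remove mult.commute)
  finally show ?case .
qed

lemma disjoint_family_agree_event: "disjoint_family_on (agree_event T) (structs_on T)"
  unfolding disjoint_family_on_def
proof (intro ballI impI)
  fix \<omega> \<omega>' assume \<omega>: "\<omega> \<in> structs_on T" "\<omega>' \<in> structs_on T" "\<omega> \<noteq> \<omega>'"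
  then obtain R t where "\<omega> R t \<noteq> \<omega>' R t"
    by (auto simp: fun_eq_iff)
  moreover from this have "(R, t) \<in> T"
    using \<omega> by (auto simp: structs_on_def)
  ultimately show "agree_event T \<omega> \<inter> agree_event T \<omega>' = {}"
    using agree_eventD by blast
qed

lemma agree_event_eq_UN:
  assumes "U \<subseteq> T"
  shows "agree_event U Y = (\<Union>\<omega>\<in>{\<omega>\<in>structs_on T. \<forall>(R, t)\<in>U. \<omega> R t = Y R t}. agree_event T \<omega>)"
proof (intro equalityI subsetI)
  fix x assume x: "x \<in> agree_event U Y"
  let ?\<omega> = "\<lambda>R t. (R, t) \<in> T \<and> struct_of x R t"
  have "?\<omega> \<in> structs_on T" "x \<in> agree_event T ?\<omega>"
    by (auto simp: structs_on_def agree_event_def)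
  moreover have "\<forall>(R, t)\<in>U. ?\<omega> R t = Y R t"
    using x assms by (auto simp: agree_event_def)
  ultimately show "x \<in> (\<Union>\<omega>\<in>{\<omega>\<in>structs_on T. \<forall>(R, t)\<in>U. \<omega> R t = Y R t}. agree_event T \<omega>)"
    by blast
next
  fix x assume "x \<in> (\<Union>\<omega>\<in>{\<omega>\<in>structs_on T. \<forall>(R, t)\<in>U. \<omega> R t = Y R t}. agree_event T \<omega>)"
  then obtain \<omega> where \<omega>: "\<forall>(R, t)\<in>U. \<omega> R t = Y R t" and x: "x \<in> agree_event T \<omega>"
    by blast
  show "x \<in> agree_event U Y"
  proof (rule agree_eventI)
    fix R t assume "(R, t) \<in> U"
    then show "struct_of x R t = Y R t"
      using agree_eventD[OF x, of R t] bspec[OF \<omega> \<open>(R, t) \<in> U\<close>] assms by auto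
  qed
qed

lemma measure_agree_event_marginal:
  assumes "finite T" "ancestral T" "U \<subseteq> T"
  shows "measure (coins coin) (agree_event U Y) =
    (\<Sum>\<omega>\<in>{\<omega>\<in>structs_on T. \<forall>(R, t)\<in>U. \<omega> R t = Y R t}. chain_weight T \<omega>)"
proof -
  interpret prob_space "coins coin" by (rule prob_space_coins)
  let ?S = "{\<omega>\<in>structs_on T. \<forall>(R, t)\<in>U. \<omega> R t = Y R t}"
  have "measure (coins coin) (agree_event U Y) = (\<Sum>\<omega>\<in>?S. measure (coins coin) (agree_event T \<omega>))"
    unfolding agree_event_eq_UN[OF assms(3)]
  proof (rule finite_measure_finite_Union)
    show "finite ?S"
      using finite_structs_on[OF assms(1)] by (rule rev_finite_subset) blast
    show "agree_event T ` ?S \<subseteq> events"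
      using assms(1,2) by (auto intro: agree_event_in_sets)
    show "disjoint_family_on (agree_event T) ?S"
      by (rule disjoint_family_on_mono[OF _ disjoint_family_agree_event]) blast
  qed
  then show ?thesis
    using assms(1,2) by (simp add: measure_agree_event)
qed

definition atoms_over :: "('s \<times> nat) set \<Rightarrow> ('r \<times> nat list) set" where
  "atoms_over A = Sigma Sig (\<lambda>R. {t. tuple_in ar A R t})"

lemma ancestral_atoms_over: "ancestral (atoms_over A)"
  using edges_subset
  by (fastforce simp: ancestral_def atoms_over_def parent_atom_def tuple_in_iff_set_zip)

lemma atoms_over_mono: "A \<subseteq> B \<Longrightarrow> atoms_over A \<subseteq> atoms_over B"
  by (auto simp: atoms_over_def tuple_in_iff_set_zip)

lemma finite_atoms_over:
  assumes "\<And>s. finite {a. (s, a) \<in> A}"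
  shows "finite (atoms_over A)"
  unfolding atoms_over_def using finite_Sig finite_tuple_in[OF assms] by (rule finite_SigmaI)

text \<open>With the y-tuples empty, each fraction in cond_prob is the 0/1 truth value of a chi.\<close>

lemma cond_prob_eq_bias:
  assumes "R \<in> Sig"
  shows "cond_prob ar G n \<omega> R a = bias \<omega> R a"
proof -
  have frac: "frac ar n \<omega> R a (chis G R ! i) = vec_of_bools (parent_config \<omega> R a) i"
    if i: "i < length (chis G R)" for i
  proof -
    obtain ys \<phi> where c: "chis G R ! i = (ys, \<phi>)"
      by fastforce
    then have "(ys, \<phi>) \<in> set (chis G R)"
      using i by (metis nth_mem)
    then have \<phi>: "qfree \<phi>" "ys = []"
      using chis_wellformed[OF assms] by auto
    then have "sat n \<omega> (env_of (xvars ar R) a) \<phi> = sat (\<lambda>_. 0) \<omega> (env_of (xvars ar R) a) \<phi>"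
      by (intro sat_qfree_cong) auto
    moreover have "sorted_tuples n [] = {[]}"
      by (auto simp: sorted_tuples_def)
    moreover have "{b. b = [] \<and> P b} = (if P [] then {[]} else {})" for P :: "nat list \<Rightarrow> bool"
      by auto
    ultimately show ?thesis
      using i c \<phi> by (simp add: frac_def vec_of_bools_def parent_config_def)
  qed
  then show ?thesis
    unfolding cond_prob_def bias_def
    by (intro arg_cong[where f = "comb G R"] ext) (auto simp: vec_of_bools_def)
qed

lemma weight_eq_chain_weight: "weight Sig ar G n \<omega> = chain_weight (atoms_over (domain_elems n)) \<omega>"
proof -
  have "weight Sig ar G n \<omega> = (\<Prod>R\<in>Sig. \<Prod>t\<in>sorted_tuples n (ar R).
      if \<omega> R t then bias \<omega> R t else 1 - bias \<omega> R t)"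
    unfolding weight_def by (intro prod.cong refl) (simp add: cond_prob_eq_bias)
  also have "\<dots> = (\<Prod>(R, t)\<in>Sigma Sig (\<lambda>R. sorted_tuples n (ar R)).
      if \<omega> R t then bias \<omega> R t else 1 - bias \<omega> R t)"
    using finite_Sig finite_tuple_in[of "domain_elems n" ar] by (simp add: tuple_in_domain_elems prod.Sigma)
  also have "Sigma Sig (\<lambda>R. sorted_tuples n (ar R)) = atoms_over (domain_elems n)"
    by (simp add: atoms_over_def tuple_in_domain_elems)
  finally show ?thesis
    by (simp add: chain_weight_def)
qed

lemma prob_n_eq_measure_agree_event:
  assumes "in_domain n A"
  shows "prob_n Sig ar G n A Y = measure (coins coin) (agree_event (atoms_over A) Y)"
proof -
  let ?T = "atoms_over (domain_elems n)"
  have fin: "finite ?T"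
    by (rule finite_atoms_over) simp
  have sub: "atoms_over A \<subseteq> ?T"
    using assms by (simp add: in_domain_iff_subset atoms_over_mono)
  have "fin_structs Sig ar n = structs_on ?T"
    by (auto simp: fin_structs_def structs_on_def atoms_over_def tuple_in_domain_elems)
  moreover have "agrees_on Sig ar A Y \<omega> \<longleftrightarrow> (\<forall>(R, t)\<in>atoms_over A. \<omega> R t = Y R t)" for \<omega>
    by (auto simp: agrees_on_def atoms_over_def)
  ultimately show ?thesis
    using measure_agree_event_marginal[OF fin ancestral_atoms_over sub]
    by (simp add: prob_n_def weight_eq_chain_weight)
qed

lemma projective: "projective Sig ar G"
  unfolding projective_def by (simp add: prob_n_eq_measure_agree_event)

lemma struct_of_in_Omega_inf: "struct_of x \<in> Omega_inf Sig ar"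
  unfolding Omega_inf_def by (auto simp: struct_of_unfold[of x])

lemma struct_of_preimage_gen_set:
  "struct_of -` gen_set Sig ar A Y = agree_event (atoms_over A) Y"
  using struct_of_in_Omega_inf
  by (auto simp: gen_set_def agree_event_def agrees_on_def atoms_over_def)

lemma gen_sets_subset_Pow: "gen_sets Sig ar \<subseteq> Pow (Omega_inf Sig ar)"
  unfolding gen_sets_def gen_set_def by blast

lemma measurable_struct_of:
  "struct_of \<in> coins coin \<rightarrow>\<^sub>M sigma (Omega_inf Sig ar) (gen_sets Sig ar)"
proof (rule measurable_measure_of[OF gen_sets_subset_Pow])
  show "struct_of \<in> space (coins coin) \<rightarrow> Omega_inf Sig ar"
    using struct_of_in_Omega_inf by blast
next
  fix E assume "E \<in> gen_sets Sig ar"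
  then obtain A Y where "E = gen_set Sig ar A Y" "finite A"
    by (auto simp: gen_sets_def)
  moreover have "finite {a. (s, a) \<in> A}" if "finite A" for s
    using finite_imageI[OF that, of snd] by (rule rev_finite_subset) force
  ultimately show "struct_of -` E \<inter> space (coins coin) \<in> sets (coins coin)"
    by (simp add: struct_of_preimage_gen_set agree_event_in_sets finite_atoms_over ancestral_atoms_over)
qed

lemma asymptotic_limit:
  "is_asymptotic_limit Sig ar G (distr (coins coin) (sigma (Omega_inf Sig ar) (gen_sets Sig ar)) struct_of)"
  (is "is_asymptotic_limit _ _ _ ?M")
proof -
  interpret prob_space "coins coin" by (rule prob_space_coins)
  have "(\<lambda>k. prob_n Sig ar G (seq k) A Y) \<longlonglongrightarrow> measure ?M (gen_set Sig ar A Y)"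
    if "\<forall>s. incseq (\<lambda>k. seq k s)" "\<forall>s. \<forall>B. \<exists>k. B \<le> seq k s" "finite A"
    for seq :: "nat \<Rightarrow> 's \<Rightarrow> nat" and A Y
  proof -
    have "gen_set Sig ar A Y \<in> sets ?M"
      using that(3) gen_sets_subset_Pow by (auto simp: gen_sets_def)
    then have limit: "measure ?M (gen_set Sig ar A Y) = measure (coins coin) (agree_event (atoms_over A) Y)"
      using measurable_struct_of by (simp add: measure_distr struct_of_preimage_gen_set)
    have "eventually (\<lambda>k. prob_n Sig ar G (seq k) A Y = measure ?M (gen_set Sig ar A Y)) sequentially"
      using eventually_in_domain[OF that] by eventually_elim (simp add: limit prob_n_eq_measure_agree_event)
    then show ?thesis
      by (rule tendsto_eventually)
  qed
  then show ?thesis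
    unfolding is_asymptotic_limit_def
    using prob_space_distr[OF measurable_struct_of] gen_sets_subset_Pow
    by (simp add: space_measure_of_conv)
qed

end

theorem proposition2:
  fixes Sig :: "'r set" and ar :: "'r \<Rightarrow> 's list" and G :: "('s, 'r) flbn"
  assumes "is_qf_lbn Sig ar G"
  shows "projective Sig ar G \<and> (\<exists>M. is_asymptotic_limit Sig ar G M)"
proof -
  interpret qf_lbn Sig ar G
    using assms by unfold_locales
  show ?thesis
    using projective asymptotic_limit by blast
qed

end
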